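(* Let $U$ be a fixed finite set and let $S\subseteq V\subseteq U$ be random sets such that $\Pr[I\in S\mid I\in V]\ge p>2/3$ for all $I\in U$. Suppose $(V,E)$ is a (random) graph on vertex set $V$ consisting of $k$ connected components, each of which is a cycle or a path. Then \[ \mathbb{E}[|V|]\le\frac{2\mathbb{E}[k]+\mathbb{E}[|T^S|]}{3p-2}. \]
   Context: For a graph $(V,E)$ and $S\subseteq V$, $T^S$ denotes the set of vertices $v\in S$ having at least $2$ neighbors in $S$. *)

theory Defs
  imports "HOL-Probability.Probability"
begin

definition simple_graph :: "'a set \<Rightarrow> 'a set set \<Rightarrow> bool" where
  "simple_graph V E \<longleftrightarrow> (\<forall>e\<in>E. card e = 2 \<and> e \<subseteq> V)"

definition adj :: "'a set set \<Rightarrow> 'a \<Rightarrow> 'a \<Rightarrow> bool" where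
  "adj E u v \<longleftrightarrow> {u, v} \<in> E"

definition component :: "'a set \<Rightarrow> 'a set set \<Rightarrow> 'a \<Rightarrow> 'a set" where
  "component V E v = {u \<in> V. (adj E)\<^sup>*\<^sup>* v u}"

definition components :: "'a set \<Rightarrow> 'a set set \<Rightarrow> 'a set set" where
  "components V E = component V E ` V"

definition is_path_on :: "'a set \<Rightarrow> 'a set set \<Rightarrow> bool" where
  "is_path_on C E \<longleftrightarrow> (\<exists>xs. distinct xs \<and> set xs = C \<and>
     {e \<in> E. e \<subseteq> C} = {{xs ! i, xs ! (i + 1)} | i. i + 1 < length xs})"

definition is_cycle_on :: "'a set \<Rightarrow> 'a set set \<Rightarrow> bool" where
  "is_cycle_on C E \<longleftrightarrow> (\<exists>xs. distinct xs \<and> length xs \<ge> 3 \<and> set xs = C \<and>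
     {e \<in> E. e \<subseteq> C} = {{xs ! i, xs ! ((i + 1) mod length xs)} | i. i < length xs})"

definition TS :: "'a set set \<Rightarrow> 'a set \<Rightarrow> 'a set" where
  "TS E S = {v \<in> S. card {u \<in> S. adj E v u} \<ge> 2}"

end

theory Submission
  imports Defs
begin

text \<open>
  Pointwise, \<open>3 |S| \<le> 2 |V| + 2 k + |T\<^sup>S|\<close>. As every vertex has degree at most 2,
  double counting in the subgraph induced by \<open>S\<close> gives \<open>2 |E(S)| \<le> |S| + |T\<^sup>S|\<close>;
  every edge outside \<open>E(S)\<close> meets \<open>V - S\<close>, so \<open>|E| \<le> |E(S)| + 2 |V - S|\<close>;
  and a path or cycle on \<open>C\<close> has at least \<open>|C| - 1\<close> edges, so \<open>|V| \<le> |E| + k\<close>.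
  Taking expectations and writing \<open>E|S| = \<Sum>\<^sub>I P[I \<in> S] \<ge> p \<Sum>\<^sub>I P[I \<in> V] = p E|V|\<close>
  yields \<open>(3p - 2) E|V| \<le> 2 E k + E|T\<^sup>S|\<close>.
\<close>

text \<open>Both shapes of component have edge sets of this form: a cycle with \<open>I = {..<n}\<close>,
  a path with \<open>I = {i. i + 1 < n}\<close>.\<close>

definition cyclic_edges :: "'a list \<Rightarrow> nat set \<Rightarrow> 'a set set" where
  "cyclic_edges xs I = (\<lambda>i. {xs ! i, xs ! (Suc i mod length xs)}) ` I"

lemma inj_on_Suc_mod: "inj_on (\<lambda>i. Suc i mod n) {..<n}"
  by (rule inj_onI) (auto simp: mod_if split: if_splits)

lemma card_neighbours_cyclic_edges_le_2:
  assumes "distinct xs" "I \<subseteq> {..<length xs}"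
  shows "card {u. {v, u} \<in> cyclic_edges xs I} \<le> 2"
proof -
  let ?n = "length xs" and ?s = "\<lambda>i. Suc i mod length xs"
  let ?A = "{i \<in> I. xs ! i = v}" and ?B = "{i \<in> I. xs ! ?s i = v}"
  have idx: "\<And>i j. i < ?n \<Longrightarrow> j < ?n \<Longrightarrow> xs ! i = xs ! j \<Longrightarrow> i = j"
    using assms(1) nth_eq_iff_index_eq by blast
  have s_lt: "\<And>i. i \<in> I \<Longrightarrow> ?s i < ?n"
    using assms(2) by (auto intro!: mod_less_divisor)
  have fin: "finite ?A" "finite ?B"
    using assms(2) by (auto intro: finite_subset)
  have "\<forall>i\<in>?A. \<forall>j\<in>?A. i = j"
    using assms(2) idx by (metis (mono_tags, lifting) lessThan_iff mem_Collect_eq subsetD)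
  then have card_A: "card ?A \<le> 1"
    using card_le_Suc0_iff_eq[OF fin(1)] by simp
  have "\<forall>i\<in>?B. \<forall>j\<in>?B. i = j"
    using assms(2) idx s_lt inj_onD[OF inj_on_Suc_mod] by (metis (mono_tags, lifting) mem_Collect_eq subsetD)
  then have card_B: "card ?B \<le> 1"
    using card_le_Suc0_iff_eq[OF fin(2)] by simp
  txt \<open>A neighbour of \<open>v\<close> follows or precedes it; by injectivity of \<open>(!) xs\<close> and of \<open>?s\<close>
    each case has at most one index.\<close>
  have "{u. {v, u} \<in> cyclic_edges xs I} \<subseteq> (\<lambda>i. xs ! ?s i) ` ?A \<union> (!) xs ` ?B"
    by (auto simp: cyclic_edges_def doubleton_eq_iff)
  then have "card {u. {v, u} \<in> cyclic_edges xs I} \<le> card ((\<lambda>i. xs ! ?s i) ` ?A \<union> (!) xs ` ?B)"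
    using fin by (intro card_mono) auto
  also have "\<dots> \<le> card ?A + card ?B"
    using fin by (meson card_Un_le card_image_le add_mono order_trans)
  finally show ?thesis
    using card_A card_B by linarith
qed

lemma card_cyclic_edges_path:
  assumes "distinct xs"
  shows "card (cyclic_edges xs {i. Suc i < length xs}) = length xs - 1"
proof -
  have "inj_on (\<lambda>i. {xs ! i, xs ! (Suc i mod length xs)}) {i. Suc i < length xs}"
    using assms by (intro inj_onI) (auto simp: doubleton_eq_iff nth_eq_iff_index_eq)
  then have "card (cyclic_edges xs {i. Suc i < length xs}) = card {i. Suc i < length xs}"
    unfolding cyclic_edges_def by (rule card_image)
  also have "card {i. Suc i < length xs} = length xs - 1"
    using card_lessThan[of "length xs - 1"] by (simp add: less_diff_conv lessThan_def)
  finally show ?thesis .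
qed

lemma path_or_cycle_cyclic_edges:
  assumes "is_cycle_on C E \<or> is_path_on C E"
  obtains xs I where "distinct xs" "set xs = C" "{i. Suc i < length xs} \<subseteq> I"
    "I \<subseteq> {..<length xs}" "{e \<in> E. e \<subseteq> C} = cyclic_edges xs I"
  using assms
proof
  assume "is_cycle_on C E"
  then obtain xs where "distinct xs" "set xs = C"
      "{e \<in> E. e \<subseteq> C} = {{xs ! i, xs ! ((i + 1) mod length xs)} | i. i < length xs}"
    unfolding is_cycle_on_def by blast
  then show thesis
    by (intro that[of xs "{..<length xs}"]) (auto simp: cyclic_edges_def)
next
  assume "is_path_on C E"
  then obtain xs where "distinct xs" "set xs = C"
      "{e \<in> E. e \<subseteq> C} = {{xs ! i, xs ! (i + 1)} | i. i + 1 < length xs}"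
    unfolding is_path_on_def by blast
  then show thesis
    by (intro that[of xs "{i. Suc i < length xs}"]) (auto simp: cyclic_edges_def)
qed

lemma partition_on_components: "partition_on V (components V E)"
proof -
  let ?R = "{(u, w). u \<in> V \<and> w \<in> V \<and> (adj E)\<^sup>*\<^sup>* u w}"
  have "symp (adj E)"
    by (auto intro: sympI simp: adj_def insert_commute)
  then have "symp (adj E)\<^sup>*\<^sup>*"
    by (rule symp_rtranclp)
  then have "equiv V ?R"
    by (intro equivI) (auto simp: refl_on_def sym_def trans_def dest: sympD)
  moreover have "components V E = V // ?R"
    by (auto simp: components_def component_def quotient_def)
  ultimately show ?thesis
    by (simp add: partition_on_quotient)
qed

lemma adj_imp_in_component: "u \<in> V \<Longrightarrow> adj E v u \<Longrightarrow> u \<in> component V E v"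
  by (auto simp: component_def)

lemma card_neighbours_le_2:
  assumes "\<And>C. C \<in> components V E \<Longrightarrow> is_cycle_on C E \<or> is_path_on C E" and "v \<in> V"
  shows "card {u \<in> V. adj E v u} \<le> 2"
proof -
  let ?C = "component V E v"
  have C: "?C \<in> components V E"
    using \<open>v \<in> V\<close> by (simp add: components_def)
  obtain xs I where xs: "distinct xs" "set xs = ?C" and "{i. Suc i < length xs} \<subseteq> I"
    and I: "I \<subseteq> {..<length xs}" and edges: "{e \<in> E. e \<subseteq> ?C} = cyclic_edges xs I"
    using path_or_cycle_cyclic_edges[OF assms(1)[OF C]] .
  have "v \<in> ?C"
    using \<open>v \<in> V\<close> by (simp add: component_def)
  then have "{u \<in> V. adj E v u} \<subseteq> {u. {v, u} \<in> cyclic_edges xs I}"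
    using adj_imp_in_component by (auto simp: adj_def simp flip: edges)
  moreover have "finite {u. {v, u} \<in> cyclic_edges xs I}"
    by (rule finite_subset[of _ ?C]) (auto simp: xs(2)[symmetric] simp flip: edges)
  ultimately show ?thesis
    using card_neighbours_cyclic_edges_le_2[OF xs(1) I] by (meson card_mono order_trans)
qed

lemma card_components_le: "finite V \<Longrightarrow> card (components V E) \<le> card V"
  unfolding components_def by (rule card_image_le)

lemma finite_edges: "finite V \<Longrightarrow> simple_graph V E \<Longrightarrow> finite E"
  unfolding simple_graph_def by (meson Pow_iff finite_Pow_iff finite_subset subsetI)

lemma card_le_Suc_card_edges_within:
  assumes "is_cycle_on C E \<or> is_path_on C E"
  shows "card C \<le> card {e \<in> E. e \<subseteq> C} + 1"
proof -
  obtain xs I where xs: "distinct xs" "set xs = C" and path: "{i. Suc i < length xs} \<subseteq> I"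
    and I: "I \<subseteq> {..<length xs}" and edges: "{e \<in> E. e \<subseteq> C} = cyclic_edges xs I"
    using path_or_cycle_cyclic_edges[OF assms] .
  have "card C \<le> card (cyclic_edges xs {i. Suc i < length xs}) + 1"
    using card_cyclic_edges_path[OF xs(1)] distinct_card[OF xs(1)] xs(2) by simp
  also have "card (cyclic_edges xs {i. Suc i < length xs}) \<le> card (cyclic_edges xs I)"
    using path I by (auto simp: cyclic_edges_def intro!: card_mono finite_imageI intro: finite_subset)
  finally show ?thesis
    by (simp add: edges)
qed

lemma card_le_card_edges_plus_card_components:
  assumes "finite V" "simple_graph V E"
    and "\<And>C. C \<in> components V E \<Longrightarrow> is_cycle_on C E \<or> is_path_on C E"
  shows "card V \<le> card E + card (components V E)"
proof -
  have P: "partition_on V (components V E)"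
    by (rule partition_on_components)
  have fin: "finite (components V E)"
    using finite_elements[OF assms(1) P] .
  have fin_C: "\<And>C. C \<in> components V E \<Longrightarrow> finite C"
    using assms(1) partition_onD1[OF P] by (metis Union_upper finite_subset)
  have disj_edges: "{e \<in> E. e \<subseteq> C1} \<inter> {e \<in> E. e \<subseteq> C2} = {}"
    if "C1 \<in> components V E" "C2 \<in> components V E" "C1 \<noteq> C2" for C1 C2
    using disjointD[OF partition_onD2[OF P] that] assms(2)
    by (fastforce simp: simple_graph_def card_2_iff)
  have "card V = (\<Sum>C\<in>components V E. card C)"
    using product_partition[OF P fin_C] .
  also have "\<dots> \<le> (\<Sum>C\<in>components V E. card {e \<in> E. e \<subseteq> C} + 1)"
    using assms(3) by (intro sum_mono card_le_Suc_card_edges_within)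
  also have "\<dots> = (\<Sum>C\<in>components V E. card {e \<in> E. e \<subseteq> C}) + card (components V E)"
    by (subst sum.distrib) simp
  also have "(\<Sum>C\<in>components V E. card {e \<in> E. e \<subseteq> C}) = card (\<Union>C\<in>components V E. {e \<in> E. e \<subseteq> C})"
    using fin finite_edges[OF assms(1,2)] disj_edges by (simp add: card_UN_disjoint)
  also have "card (\<Union>C\<in>components V E. {e \<in> E. e \<subseteq> C}) \<le> card E"
    using finite_edges[OF assms(1,2)] by (intro card_mono) auto
  finally show ?thesis
    by simp
qed

lemma card_incident_edges_le:
  assumes "simple_graph V E" "finite A"
  shows "card {e \<in> E. e \<subseteq> A \<and> v \<in> e} \<le> card {u \<in> A. adj E v u}"
proof -
  have "{e \<in> E. e \<subseteq> A \<and> v \<in> e} \<subseteq> (\<lambda>u. {v, u}) ` {u \<in> A. adj E v u}"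
    using assms(1) by (fastforce simp: simple_graph_def card_2_iff adj_def insert_commute)
  then have "card {e \<in> E. e \<subseteq> A \<and> v \<in> e} \<le> card ((\<lambda>u. {v, u}) ` {u \<in> A. adj E v u})"
    using assms(2) by (intro card_mono) auto
  also have "\<dots> \<le> card {u \<in> A. adj E v u}"
    using assms(2) by (intro card_image_le) simp
  finally show ?thesis .
qed

lemma card_edges_le_card_edges_within:
  assumes "finite V" "simple_graph V E" "\<And>v. v \<in> V \<Longrightarrow> card {u \<in> V. adj E v u} \<le> d"
  shows "card E \<le> card {e \<in> E. e \<subseteq> S} + d * card (V - S)"
proof -
  have fin_E: "finite E"
    using finite_edges[OF assms(1,2)] .
  have "E \<subseteq> {e \<in> E. e \<subseteq> S} \<union> (\<Union>w\<in>V - S. {e \<in> E. e \<subseteq> V \<and> w \<in> e})"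
    using assms(2) unfolding simple_graph_def by blast
  then have "card E \<le> card ({e \<in> E. e \<subseteq> S} \<union> (\<Union>w\<in>V - S. {e \<in> E. e \<subseteq> V \<and> w \<in> e}))"
    by (intro card_mono finite_subset[OF _ fin_E]) auto
  also have "\<dots> \<le> card {e \<in> E. e \<subseteq> S} + card (\<Union>w\<in>V - S. {e \<in> E. e \<subseteq> V \<and> w \<in> e})"
    by (rule card_Un_le)
  also have "\<dots> \<le> card {e \<in> E. e \<subseteq> S} + (\<Sum>w\<in>V - S. card {e \<in> E. e \<subseteq> V \<and> w \<in> e})"
    using assms(1) by (simp add: card_UN_le)
  also have "(\<Sum>w\<in>V - S. card {e \<in> E. e \<subseteq> V \<and> w \<in> e}) \<le> (\<Sum>w\<in>V - S. d)"
    using card_incident_edges_le[OF assms(2,1)] assms(3) by (intro sum_mono) (meson DiffD1 order_trans)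
  finally show ?thesis
    by (simp add: mult.commute)
qed

lemma two_card_edges_within_le:
  assumes "simple_graph V E" "finite S" "\<And>v. v \<in> S \<Longrightarrow> card {u \<in> S. adj E v u} \<le> 2"
  shows "2 * card {e \<in> E. e \<subseteq> S} \<le> card S + card (TS E S)"
proof -
  let ?F = "{e \<in> E. e \<subseteq> S}"
  have "finite ?F"
    by (rule finite_subset[of _ "Pow S"]) (use assms(2) in auto)
  moreover have "{v \<in> S. v \<in> e} = e" if "e \<in> ?F" for e
    using that by blast
  then have "\<forall>e\<in>?F. card {v \<in> S. v \<in> e} = 2"
    using assms(1) by (simp add: simple_graph_def)
  ultimately have "2 * card ?F = (\<Sum>v\<in>S. card {e \<in> ?F. v \<in> e})"
    using assms(2) by (intro sum_multicount[symmetric])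
  also have "\<dots> \<le> (\<Sum>v\<in>S. 1 + of_bool (v \<in> TS E S))"
  proof (rule sum_mono)
    fix v assume "v \<in> S"
    have "{e \<in> ?F. v \<in> e} = {e \<in> E. e \<subseteq> S \<and> v \<in> e}"
      by blast
    then have "card {e \<in> ?F. v \<in> e} \<le> card {u \<in> S. adj E v u}"
      using card_incident_edges_le[OF assms(1,2)] by simp
    also have "\<dots> \<le> 1 + of_bool (v \<in> TS E S)"
      using assms(3)[OF \<open>v \<in> S\<close>] \<open>v \<in> S\<close> by (auto simp: TS_def)
    finally show "card {e \<in> ?F. v \<in> e} \<le> 1 + of_bool (v \<in> TS E S)" .
  qed
  also have "\<dots> = card S + card (TS E S)"
    using assms(2) by (subst sum.distrib) (simp add: TS_def Int_def)
  finally show ?thesis .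
qed

lemma three_card_le:
  assumes "finite V" "S \<subseteq> V" "simple_graph V E"
    and "\<And>C. C \<in> components V E \<Longrightarrow> is_cycle_on C E \<or> is_path_on C E"
  shows "3 * card S \<le> 2 * card V + 2 * card (components V E) + card (TS E S)"
proof -
  have deg: "card {u \<in> V. adj E v u} \<le> 2" if "v \<in> V" for v
    using card_neighbours_le_2[OF assms(4) that] .
  have "card {u \<in> S. adj E v u} \<le> 2" if "v \<in> S" for v
  proof -
    have "card {u \<in> S. adj E v u} \<le> card {u \<in> V. adj E v u}"
      using assms(1,2) by (intro card_mono) auto
    then show ?thesis
      using deg[of v] assms(2) that by auto
  qed
  then have "2 * card {e \<in> E. e \<subseteq> S} \<le> card S + card (TS E S)"
    using two_card_edges_within_le[OF assms(3) finite_subset[OF assms(2,1)]] by blast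
  moreover have "card E \<le> card {e \<in> E. e \<subseteq> S} + 2 * card (V - S)"
    using card_edges_le_card_edges_within[OF assms(1,3) deg] .
  moreover have "card V \<le> card E + card (components V E)"
    using card_le_card_edges_plus_card_components[OF assms(1,3,4)] .
  moreover have "card (V - S) + card S = card V"
    using card_Diff_subset[OF finite_subset[OF assms(2,1)] assms(2)] card_mono[OF assms(1,2)] by simp
  ultimately show ?thesis
    by linarith
qed

lemma integrable_measure_pmf_bounded_nat:
  fixes f :: "'w \<Rightarrow> nat"
  assumes "\<And>\<omega>. \<omega> \<in> set_pmf M \<Longrightarrow> f \<omega> \<le> B"
  shows "integrable (measure_pmf M) (\<lambda>\<omega>. real (f \<omega>))"
  by (rule measure_pmf.integrable_const_bound[where B = B]) (use assms in \<open>auto simp: AE_measure_pmf_iff\<close>)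

lemma expectation_card_eq_sum_prob:
  assumes "finite U" "\<And>\<omega>. \<omega> \<in> set_pmf M \<Longrightarrow> X \<omega> \<subseteq> U"
  shows "measure_pmf.expectation M (\<lambda>\<omega>. real (card (X \<omega>)))
    = (\<Sum>I\<in>U. measure_pmf.prob M {\<omega>. I \<in> X \<omega>})"
proof -
  have "measure_pmf.expectation M (\<lambda>\<omega>. real (card (X \<omega>)))
      = measure_pmf.expectation M (\<lambda>\<omega>. \<Sum>I\<in>U. indicator {\<omega>. I \<in> X \<omega>} \<omega>)"
  proof (rule integral_cong_AE)
    have "real (card (X \<omega>)) = (\<Sum>I\<in>U. indicator {\<omega>. I \<in> X \<omega>} \<omega>)" if "\<omega> \<in> set_pmf M" for \<omega>
      using assms(1) assms(2)[OF that] by (simp add: indicator_def of_bool_def[symmetric] Int_absorb1 Collect_mem_eq)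
    then show "AE \<omega> in measure_pmf M. real (card (X \<omega>)) = (\<Sum>I\<in>U. indicator {\<omega>. I \<in> X \<omega>} \<omega>)"
      by (simp add: AE_measure_pmf_iff)
  qed simp_all
  also have "\<dots> = (\<Sum>I\<in>U. measure_pmf.expectation M (indicator {\<omega>. I \<in> X \<omega>}))"
    by (intro Bochner_Integration.integral_sum measure_pmf.integrable_const_bound[where B = 1])
      (auto simp: indicator_def)
  finally show ?thesis
    by simp
qed

lemma expectation_card_ge_mult:
  assumes "finite U" "\<And>\<omega>. \<omega> \<in> set_pmf M \<Longrightarrow> S \<omega> \<subseteq> V \<omega> \<and> V \<omega> \<subseteq> U"
    and "\<And>I. I \<in> U \<Longrightarrow>
      measure_pmf.prob M {\<omega>. I \<in> S \<omega> \<and> I \<in> V \<omega>} \<ge> p * measure_pmf.prob M {\<omega>. I \<in> V \<omega>}"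
  shows "p * measure_pmf.expectation M (\<lambda>\<omega>. real (card (V \<omega>)))
    \<le> measure_pmf.expectation M (\<lambda>\<omega>. real (card (S \<omega>)))"
proof -
  have "p * measure_pmf.expectation M (\<lambda>\<omega>. real (card (V \<omega>)))
      = (\<Sum>I\<in>U. p * measure_pmf.prob M {\<omega>. I \<in> V \<omega>})"
    using assms(1,2) by (simp add: expectation_card_eq_sum_prob sum_distrib_left)
  also have "\<dots> \<le> (\<Sum>I\<in>U. measure_pmf.prob M {\<omega>. I \<in> S \<omega> \<inter> V \<omega>})"
    using assms(3) by (intro sum_mono) simp
  also have "\<dots> = measure_pmf.expectation M (\<lambda>\<omega>. real (card (S \<omega> \<inter> V \<omega>)))"
    using assms(1,2) by (intro expectation_card_eq_sum_prob[symmetric]) auto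
  also have "\<dots> = measure_pmf.expectation M (\<lambda>\<omega>. real (card (S \<omega>)))"
    using assms(2) by (intro integral_cong_AE) (auto simp: AE_measure_pmf_iff Int_absorb2)
  finally show ?thesis .
qed

lemma expectation_three_card_le:
  assumes "finite U" "\<And>\<omega>. \<omega> \<in> set_pmf M \<Longrightarrow> S \<omega> \<subseteq> V \<omega> \<and> V \<omega> \<subseteq> U"
    and "\<And>\<omega>. \<omega> \<in> set_pmf M \<Longrightarrow> simple_graph (V \<omega>) (E \<omega>)"
    and "\<And>\<omega> C. \<omega> \<in> set_pmf M \<Longrightarrow> C \<in> components (V \<omega>) (E \<omega>) \<Longrightarrow>
      is_cycle_on C (E \<omega>) \<or> is_path_on C (E \<omega>)"
  shows "3 * measure_pmf.expectation M (\<lambda>\<omega>. real (card (S \<omega>)))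
    \<le> 2 * measure_pmf.expectation M (\<lambda>\<omega>. real (card (V \<omega>)))
      + 2 * measure_pmf.expectation M (\<lambda>\<omega>. real (card (components (V \<omega>) (E \<omega>))))
      + measure_pmf.expectation M (\<lambda>\<omega>. real (card (TS (E \<omega>) (S \<omega>))))"
proof -
  have card_V: "card (V \<omega>) \<le> card U" if "\<omega> \<in> set_pmf M" for \<omega>
    using assms(1) assms(2)[OF that] by (intro card_mono) auto
  have card_S: "card (S \<omega>) \<le> card U" if "\<omega> \<in> set_pmf M" for \<omega>
    using assms(1) assms(2)[OF that] by (intro card_mono) auto
  have card_components: "card (components (V \<omega>) (E \<omega>)) \<le> card U" if "\<omega> \<in> set_pmf M" for \<omega>
    using card_components_le card_V[OF that] assms(1) assms(2)[OF that] by (meson finite_subset order_trans)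
  have card_TS: "card (TS (E \<omega>) (S \<omega>)) \<le> card U" if "\<omega> \<in> set_pmf M" for \<omega>
    using assms(1) assms(2)[OF that] by (intro card_mono) (auto simp: TS_def)
  have integrable:
    "integrable (measure_pmf M) (\<lambda>\<omega>. real (card (V \<omega>)))"
    "integrable (measure_pmf M) (\<lambda>\<omega>. real (card (S \<omega>)))"
    "integrable (measure_pmf M) (\<lambda>\<omega>. real (card (components (V \<omega>) (E \<omega>))))"
    "integrable (measure_pmf M) (\<lambda>\<omega>. real (card (TS (E \<omega>) (S \<omega>))))"
    by (rule integrable_measure_pmf_bounded_nat, erule card_V card_S card_components card_TS)+
  have "real (3 * card (S \<omega>))
      \<le> real (2 * card (V \<omega>) + 2 * card (components (V \<omega>) (E \<omega>)) + card (TS (E \<omega>) (S \<omega>)))"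
    if "\<omega> \<in> set_pmf M" for \<omega>
    using assms(1) assms(2-4)[OF that] by (intro of_nat_mono three_card_le) (auto intro: finite_subset)
  then have "measure_pmf.expectation M (\<lambda>\<omega>. 3 * real (card (S \<omega>)))
      \<le> measure_pmf.expectation M (\<lambda>\<omega>. 2 * real (card (V \<omega>))
           + 2 * real (card (components (V \<omega>) (E \<omega>))) + real (card (TS (E \<omega>) (S \<omega>))))"
    using integrable by (intro integral_mono_AE) (auto simp: AE_measure_pmf_iff)
  then show ?thesis
    using integrable by simp
qed

theorem lemma4p13:
  fixes U :: "'a set" and \<Omega> :: "'w pmf"
    and Vr Sr :: "'w \<Rightarrow> 'a set" and Er :: "'w \<Rightarrow> 'a set set"
    and k :: "'w \<Rightarrow> nat" and p :: real
  assumes "finite U"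
    and "\<And>\<omega>. \<omega> \<in> set_pmf \<Omega> \<Longrightarrow> Sr \<omega> \<subseteq> Vr \<omega> \<and> Vr \<omega> \<subseteq> U"
    and "\<And>\<omega>. \<omega> \<in> set_pmf \<Omega> \<Longrightarrow> simple_graph (Vr \<omega>) (Er \<omega>)"
    and "\<And>\<omega>. \<omega> \<in> set_pmf \<Omega> \<Longrightarrow> k \<omega> = card (components (Vr \<omega>) (Er \<omega>))"
    and "\<And>\<omega> C. \<omega> \<in> set_pmf \<Omega> \<Longrightarrow> C \<in> components (Vr \<omega>) (Er \<omega>) \<Longrightarrow>
           is_cycle_on C (Er \<omega>) \<or> is_path_on C (Er \<omega>)"
    and "p > 2 / 3"
    and "\<And>I. I \<in> U \<Longrightarrow>
           measure_pmf.prob \<Omega> {\<omega>. I \<in> Sr \<omega> \<and> I \<in> Vr \<omega>}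
             \<ge> p * measure_pmf.prob \<Omega> {\<omega>. I \<in> Vr \<omega>}"
  shows "measure_pmf.expectation \<Omega> (\<lambda>\<omega>. real (card (Vr \<omega>)))
           \<le> (2 * measure_pmf.expectation \<Omega> (\<lambda>\<omega>. real (k \<omega>))
              + measure_pmf.expectation \<Omega> (\<lambda>\<omega>. real (card (TS (Er \<omega>) (Sr \<omega>)))))
             / (3 * p - 2)"
proof -
  have "measure_pmf.expectation \<Omega> (\<lambda>\<omega>. real (k \<omega>))
      = measure_pmf.expectation \<Omega> (\<lambda>\<omega>. real (card (components (Vr \<omega>) (Er \<omega>))))"
    using assms(4) by (intro integral_cong_AE) (auto simp: AE_measure_pmf_iff)
  then have "(3 * p - 2) * measure_pmf.expectation \<Omega> (\<lambda>\<omega>. real (card (Vr \<omega>)))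
      \<le> 2 * measure_pmf.expectation \<Omega> (\<lambda>\<omega>. real (k \<omega>))
        + measure_pmf.expectation \<Omega> (\<lambda>\<omega>. real (card (TS (Er \<omega>) (Sr \<omega>))))"
    using expectation_card_ge_mult[OF assms(1,2,7)]
      expectation_three_card_le[where M = \<Omega> and S = Sr and V = Vr and E = Er, OF assms(1,2,3,5)]
    unfolding left_diff_distrib mult.assoc by linarith
  moreover have "3 * p - 2 > 0"
    using assms(6) by simp
  ultimately show ?thesis
    by (simp add: pos_le_divide_eq mult.commute)
qed

end
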